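(* Let $\mathcal I$ be the poset of open connected intervals of $S^1$ whose closure is properly contained in $S^1$, ordered by inclusion. Every $\mathrm{C}^*$-net bundle $(\mathcal A,\jmath)_{\mathcal I}$ over $\mathcal I$ whose Čech cocycle is globally defined is trivial.
   Context: A $\mathrm{C}^*$-net bundle $(\mathcal A,\jmath)_K$ over a poset $K$: unital $\mathrm{C}^*$-algebras $\mathcal A_o$ ($o\in K$) and ${}^*$-isomorphisms $\jmath_{oa}:\mathcal A_a\to\mathcal A_o$ ($a\le o$) with $\jmath_{oa}\circ\jmath_{ae}=\jmath_{oe}$. It is trivial if there are ${}^*$-isomorphisms $\phi_o:\mathcal A_o\to\mathrm A$ onto a fixed $\mathrm{C}^*$-algebra with $\phi_o\circ\jmath_{oa}=\phi_a$ for all $a\le o$ (isomorphism with the constant net bundle). For nonempty $F\subseteq K$ and $o,\tilde o\in K$ with every element of $F$ below both $o$ and $\tilde o$, $(F;\tilde o,o)$ is a $1$-simplex of the simplicial set $\Sigma^\circ_*(K)$ (whose $n$-simplices are strings $(F;o_{n+1},\dots,o_1)$ with $F$ nonempty and every element of $F$ below every $o_i$). $\mathcal A^F_o$ is the $\mathrm{C}^*$-subalgebra of $\mathcal A_o$ generated by the $\jmath_{oa}(\mathcal A_a)$, $a\in F$. The Čech cocycle is defined on $(F;\tilde o,o)$ if there is a ${}^*$-isomorphism $\zeta^F_{\tilde oo}:\mathcal A^F_o\to\mathcal A^F_{\tilde o}$ with $\zeta^F_{\tilde oo}\circ\jmath_{oa}=\jmath_{\tilde oa}$ for all $a\in F$;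 it is globally defined if it is defined on every $1$-simplex of $\Sigma^\circ_*(K)$ (i.e. its domain is all of $\Sigma^\circ_*(K)$). *)

theory Defs
  imports "HOL-Analysis.Analysis"
begin

record 'a cstar =
  cs_carrier :: "'a set"
  cs_zero :: 'a
  cs_one :: 'a
  cs_add :: "'a \<Rightarrow> 'a \<Rightarrow> 'a"
  cs_mul :: "'a \<Rightarrow> 'a \<Rightarrow> 'a"
  cs_smul :: "complex \<Rightarrow> 'a \<Rightarrow> 'a"
  cs_star :: "'a \<Rightarrow> 'a"
  cs_norm :: "'a \<Rightarrow> real"

definition cs_diff :: "'a cstar \<Rightarrow> 'a \<Rightarrow> 'a \<Rightarrow> 'a" where
  "cs_diff A x y = cs_add A x (cs_smul A (-1) y)"

definition unital_cstar_algebra :: "'a cstar \<Rightarrow> bool" where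
  "unital_cstar_algebra A \<longleftrightarrow>
     (let C = cs_carrier A; p = cs_add A; m = cs_mul A; s = cs_smul A;
          st = cs_star A; n = cs_norm A; z = cs_zero A; u = cs_one A in
     \<comment> \<open>closure\<close>
     z \<in> C \<and> u \<in> C \<and>
     (\<forall>x\<in>C. \<forall>y\<in>C. p x y \<in> C \<and> m x y \<in> C) \<and>
     (\<forall>c. \<forall>x\<in>C. s c x \<in> C) \<and> (\<forall>x\<in>C. st x \<in> C) \<and>
     \<comment> \<open>complex vector space\<close>
     (\<forall>x\<in>C. \<forall>y\<in>C. \<forall>w\<in>C. p (p x y) w = p x (p y w)) \<and>
     (\<forall>x\<in>C. \<forall>y\<in>C. p x y = p y x) \<and>
     (\<forall>x\<in>C. p z x = x) \<and>
     (\<forall>x\<in>C. p x (s (-1) x) = z) \<and>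
     (\<forall>a b. \<forall>x\<in>C. s a (s b x) = s (a * b) x) \<and>
     (\<forall>x\<in>C. s 1 x = x) \<and>
     (\<forall>a. \<forall>x\<in>C. \<forall>y\<in>C. s a (p x y) = p (s a x) (s a y)) \<and>
     (\<forall>a b. \<forall>x\<in>C. s (a + b) x = p (s a x) (s b x)) \<and>
     \<comment> \<open>associative unital algebra\<close>
     (\<forall>x\<in>C. \<forall>y\<in>C. \<forall>w\<in>C. m (m x y) w = m x (m y w)) \<and>
     (\<forall>x\<in>C. \<forall>y\<in>C. \<forall>w\<in>C. m x (p y w) = p (m x y) (m x w)) \<and>
     (\<forall>x\<in>C. \<forall>y\<in>C. \<forall>w\<in>C. m (p x y) w = p (m x w) (m y w)) \<and>
     (\<forall>a. \<forall>x\<in>C. \<forall>y\<in>C. m (s a x) y = s a (m x y) \<and> m x (s a y) = s a (m x y)) \<and>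
     (\<forall>x\<in>C. m u x = x \<and> m x u = x) \<and>
     \<comment> \<open>involution\<close>
     (\<forall>x\<in>C. st (st x) = x) \<and>
     (\<forall>x\<in>C. \<forall>y\<in>C. st (p x y) = p (st x) (st y)) \<and>
     (\<forall>a. \<forall>x\<in>C. st (s a x) = s (cnj a) (st x)) \<and>
     (\<forall>x\<in>C. \<forall>y\<in>C. st (m x y) = m (st y) (st x)) \<and>
     \<comment> \<open>norm\<close>
     (\<forall>x\<in>C. n x \<ge> 0 \<and> (n x = 0 \<longleftrightarrow> x = z)) \<and>
     (\<forall>x\<in>C. \<forall>y\<in>C. n (p x y) \<le> n x + n y) \<and>
     (\<forall>a. \<forall>x\<in>C. n (s a x) = cmod a * n x) \<and>
     (\<forall>x\<in>C. \<forall>y\<in>C. n (m x y) \<le> n x * n y) \<and>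
     \<comment> \<open>C*-identity\<close>
     (\<forall>x\<in>C. n (m (st x) x) = (n x)\<^sup>2) \<and>
     \<comment> \<open>completeness\<close>
     (\<forall>q. (\<forall>k. q k \<in> C) \<longrightarrow>
          (\<forall>e>0. \<exists>N. \<forall>k\<ge>N. \<forall>l\<ge>N. n (cs_diff A (q k) (q l)) < e) \<longrightarrow>
          (\<exists>x\<in>C. (\<lambda>k. n (cs_diff A (q k) x)) \<longlonglongrightarrow> 0)))"

definition star_hom :: "'a cstar \<Rightarrow> 'b cstar \<Rightarrow> ('a \<Rightarrow> 'b) \<Rightarrow> bool" where
  "star_hom A B f \<longleftrightarrow>
     f ` cs_carrier A \<subseteq> cs_carrier B \<and>
     f (cs_one A) = cs_one B \<and>
     (\<forall>x\<in>cs_carrier A. \<forall>y\<in>cs_carrier A.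
        f (cs_add A x y) = cs_add B (f x) (f y) \<and> f (cs_mul A x y) = cs_mul B (f x) (f y)) \<and>
     (\<forall>c. \<forall>x\<in>cs_carrier A. f (cs_smul A c x) = cs_smul B c (f x)) \<and>
     (\<forall>x\<in>cs_carrier A. f (cs_star A x) = cs_star B (f x))"

definition star_iso :: "'a cstar \<Rightarrow> 'b cstar \<Rightarrow> ('a \<Rightarrow> 'b) \<Rightarrow> bool" where
  "star_iso A B f \<longleftrightarrow> star_hom A B f \<and> bij_betw f (cs_carrier A) (cs_carrier B)"

definition closed_star_subalgebra :: "'a cstar \<Rightarrow> 'a set \<Rightarrow> bool" where
  "closed_star_subalgebra A T \<longleftrightarrow>
     T \<subseteq> cs_carrier A \<and> cs_zero A \<in> T \<and>
     (\<forall>x\<in>T. \<forall>y\<in>T. cs_add A x y \<in> T \<and> cs_mul A x y \<in> T) \<and>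
     (\<forall>c. \<forall>x\<in>T. cs_smul A c x \<in> T) \<and> (\<forall>x\<in>T. cs_star A x \<in> T) \<and>
     (\<forall>q l. (\<forall>k. q k \<in> T) \<longrightarrow> l \<in> cs_carrier A \<longrightarrow>
        (\<lambda>k. cs_norm A (cs_diff A (q k) l)) \<longlonglongrightarrow> 0 \<longrightarrow> l \<in> T)"

definition generated_cstar :: "'a cstar \<Rightarrow> 'a set \<Rightarrow> 'a set" where
  "generated_cstar A S = \<Inter> {T. closed_star_subalgebra A T \<and> S \<subseteq> T}"

definition restrict_cstar :: "'a cstar \<Rightarrow> 'a set \<Rightarrow> 'a cstar" where
  "restrict_cstar A T = A\<lparr>cs_carrier := T\<rparr>"

definition cstar_net_bundle ::
  "'i set \<Rightarrow> ('i \<Rightarrow> 'i \<Rightarrow> bool) \<Rightarrow> ('i \<Rightarrow> 'a cstar) \<Rightarrow> ('i \<Rightarrow> 'i \<Rightarrow> 'a \<Rightarrow> 'a) \<Rightarrow> bool" where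
  "cstar_net_bundle K le A j \<longleftrightarrow>
     (\<forall>p\<in>K. unital_cstar_algebra (A p)) \<and>
     (\<forall>p\<in>K. \<forall>a\<in>K. le a p \<longrightarrow> star_iso (A a) (A p) (j p a)) \<and>
     (\<forall>p\<in>K. \<forall>a\<in>K. \<forall>e\<in>K. le e a \<longrightarrow> le a p \<longrightarrow>
        (\<forall>x\<in>cs_carrier (A e). j p a (j a e x) = j p e x))"

definition trivial_net_bundle ::
  "'i set \<Rightarrow> ('i \<Rightarrow> 'i \<Rightarrow> bool) \<Rightarrow> ('i \<Rightarrow> 'a cstar) \<Rightarrow> ('i \<Rightarrow> 'i \<Rightarrow> 'a \<Rightarrow> 'a) \<Rightarrow> bool" where
  "trivial_net_bundle K le A j \<longleftrightarrow>
     (\<exists>(B :: 'a cstar) (\<phi> :: 'i \<Rightarrow> 'a \<Rightarrow> 'a).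
        unital_cstar_algebra B \<and>
        (\<forall>p\<in>K. star_iso (A p) B (\<phi> p)) \<and>
        (\<forall>p\<in>K. \<forall>a\<in>K. le a p \<longrightarrow> (\<forall>x\<in>cs_carrier (A a). \<phi> p (j p a x) = \<phi> a x)))"

definition one_simplex :: "'i set \<Rightarrow> ('i \<Rightarrow> 'i \<Rightarrow> bool) \<Rightarrow> 'i set \<Rightarrow> 'i \<Rightarrow> 'i \<Rightarrow> bool" where
  "one_simplex K le F p' p \<longleftrightarrow>
     F \<noteq> {} \<and> F \<subseteq> K \<and> p \<in> K \<and> p' \<in> K \<and> (\<forall>a\<in>F. le a p \<and> le a p')"

definition net_sub :: "('i \<Rightarrow> 'a cstar) \<Rightarrow> ('i \<Rightarrow> 'i \<Rightarrow> 'a \<Rightarrow> 'a) \<Rightarrow> 'i set \<Rightarrow> 'i \<Rightarrow> 'a cstar" where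
  "net_sub A j F p = restrict_cstar (A p)
     (generated_cstar (A p) (\<Union>a\<in>F. j p a ` cs_carrier (A a)))"

definition cech_defined_on ::
  "('i \<Rightarrow> 'a cstar) \<Rightarrow> ('i \<Rightarrow> 'i \<Rightarrow> 'a \<Rightarrow> 'a) \<Rightarrow> 'i set \<Rightarrow> 'i \<Rightarrow> 'i \<Rightarrow> bool" where
  "cech_defined_on A j F p' p \<longleftrightarrow>
     (\<exists>\<zeta>. star_iso (net_sub A j F p) (net_sub A j F p') \<zeta> \<and>
          (\<forall>a\<in>F. \<forall>x\<in>cs_carrier (A a). \<zeta> (j p a x) = j p' a x))"

definition cech_globally_defined ::
  "'i set \<Rightarrow> ('i \<Rightarrow> 'i \<Rightarrow> bool) \<Rightarrow> ('i \<Rightarrow> 'a cstar) \<Rightarrow> ('i \<Rightarrow> 'i \<Rightarrow> 'a \<Rightarrow> 'a) \<Rightarrow> bool" where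
  "cech_globally_defined K le A j \<longleftrightarrow>
     (\<forall>F p' p. one_simplex K le F p' p \<longrightarrow> cech_defined_on A j F p' p)"

definition S1 :: "complex set" where
  "S1 = sphere 0 1"

definition circle_intervals :: "complex set set" where
  "circle_intervals = {I. I \<noteq> {} \<and> openin (top_of_set S1) I \<and> connected I \<and> closure I \<subset> S1}"

end

theory Submission
  imports Defs
begin

text \<open>For intervals \<open>a, b\<close> with a common upper bound \<open>s\<close>, the Cech isomorphism on the
  1-simplex \<open>({a, b}; s', s)\<close> shows that the transport \<open>inv (j s b) \<circ> j s a\<close> from \<open>A a\<close> to
  \<open>A b\<close> does not depend on \<open>s\<close>. Hence transports compose along any three intervals with a common
  upper bound. Arcs of radius at most \<open>1/20\<close> have this property (any three of them miss a
  neighbourhood of some point), and every interval contains such an arc. Pulling \<open>A p\<close> back to a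
  small arc inside \<open>p\<close> and transporting it to a fixed small arc therefore gives isomorphisms onto
  one algebra that are compatible with the net.\<close>

lemma inv_into_preserves_binop:
  assumes f: "bij_betw f S T"
    and closed: "\<And>x y. x \<in> S \<Longrightarrow> y \<in> S \<Longrightarrow> h x y \<in> S"
    and hom: "\<And>x y. x \<in> S \<Longrightarrow> y \<in> S \<Longrightarrow> f (h x y) = k (f x) (f y)"
    and uv: "u \<in> T" "v \<in> T"
  shows "inv_into S f (k u v) = h (inv_into S f u) (inv_into S f v)"
proof -
  let ?g = "inv_into S f"
  have g: "?g u \<in> S" "?g v \<in> S"
    using uv bij_betwE[OF bij_betw_inv_into[OF f]] by auto
  have "k u v = f (h (?g u) (?g v))"
    using hom[OF g] uv by (simp add: bij_betw_inv_into_right[OF f])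
  then show ?thesis
    using closed[OF g] by (simp add: bij_betw_inv_into_left[OF f])
qed

lemma inv_into_preserves_unop:
  assumes f: "bij_betw f S T"
    and closed: "\<And>x. x \<in> S \<Longrightarrow> h x \<in> S"
    and hom: "\<And>x. x \<in> S \<Longrightarrow> f (h x) = k (f x)"
    and u: "u \<in> T"
  shows "inv_into S f (k u) = h (inv_into S f u)"
  using inv_into_preserves_binop[OF f, of "\<lambda>x _. h x" "\<lambda>x _. k x" u u] closed hom u by simp

lemma star_iso_comp:
  assumes "star_iso A B f" "star_iso B C g"
  shows "star_iso A C (g \<circ> f)"
proof -
  have "f x \<in> cs_carrier B" if "x \<in> cs_carrier A" for x
    using assms(1) that unfolding star_iso_def star_hom_def by auto
  then show ?thesis
    using assms unfolding star_iso_def star_hom_def by (auto intro: bij_betw_trans)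
qed

lemma star_iso_inv_into:
  assumes A: "unital_cstar_algebra A" and f: "star_iso A B f"
  shows "star_iso B A (inv_into (cs_carrier A) f)"
proof -
  let ?g = "inv_into (cs_carrier A) f"
  have bij: "bij_betw f (cs_carrier A) (cs_carrier B)" and hom: "star_hom A B f"
    using f by (simp_all add: star_iso_def)
  have one: "cs_one A \<in> cs_carrier A"
    and add: "\<And>x y. x \<in> cs_carrier A \<Longrightarrow> y \<in> cs_carrier A \<Longrightarrow> cs_add A x y \<in> cs_carrier A"
    and mul: "\<And>x y. x \<in> cs_carrier A \<Longrightarrow> y \<in> cs_carrier A \<Longrightarrow> cs_mul A x y \<in> cs_carrier A"
    and smul: "\<And>c x. x \<in> cs_carrier A \<Longrightarrow> cs_smul A c x \<in> cs_carrier A"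
    and star: "\<And>x. x \<in> cs_carrier A \<Longrightarrow> cs_star A x \<in> cs_carrier A"
    using A unfolding unital_cstar_algebra_def Let_def by auto
  have "star_hom B A ?g"
    unfolding star_hom_def
  proof (intro conjI ballI allI)
    show "?g ` cs_carrier B \<subseteq> cs_carrier A"
      using bij_betwE[OF bij_betw_inv_into[OF bij]] by blast
    show "?g (cs_one B) = cs_one A"
      using hom one bij_betw_inv_into_left[OF bij] unfolding star_hom_def by metis
  next
    fix x y assume "x \<in> cs_carrier B" "y \<in> cs_carrier B"
    then show "?g (cs_add B x y) = cs_add A (?g x) (?g y)"
      and "?g (cs_mul B x y) = cs_mul A (?g x) (?g y)"
      using hom add mul unfolding star_hom_def
      by (auto intro: inv_into_preserves_binop[OF bij])
  next
    fix c x assume "x \<in> cs_carrier B"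
    then show "?g (cs_smul B c x) = cs_smul A c (?g x)"
      and "?g (cs_star B x) = cs_star A (?g x)"
      using hom smul star unfolding star_hom_def
      by (auto intro: inv_into_preserves_unop[OF bij])
  qed
  then show ?thesis
    using bij_betw_inv_into[OF bij] by (simp add: star_iso_def)
qed

locale cech_defined_net_bundle =
  fixes K :: "'i set" and le :: "'i \<Rightarrow> 'i \<Rightarrow> bool"
    and A :: "'i \<Rightarrow> 'a cstar" and j :: "'i \<Rightarrow> 'i \<Rightarrow> 'a \<Rightarrow> 'a"
  assumes net_bundle: "cstar_net_bundle K le A j"
    and cech: "cech_globally_defined K le A j"
    and trans: "transp_on K le"
begin

lemma unital_cstar_algebra_fibre: "p \<in> K \<Longrightarrow> unital_cstar_algebra (A p)"
  using net_bundle unfolding cstar_net_bundle_def by blast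

lemma star_iso_j: "a \<in> K \<Longrightarrow> p \<in> K \<Longrightarrow> le a p \<Longrightarrow> star_iso (A a) (A p) (j p a)"
  using net_bundle unfolding cstar_net_bundle_def by blast

lemma bij_betw_j: "a \<in> K \<Longrightarrow> p \<in> K \<Longrightarrow> le a p \<Longrightarrow> bij_betw (j p a) (cs_carrier (A a)) (cs_carrier (A p))"
  using star_iso_j unfolding star_iso_def by blast

lemma j_in_carrier:
  "\<lbrakk>a \<in> K; p \<in> K; le a p; x \<in> cs_carrier (A a)\<rbrakk> \<Longrightarrow> j p a x \<in> cs_carrier (A p)"
  using bij_betw_j bij_betwE by metis

lemma inv_into_j:
  assumes "a \<in> K" "p \<in> K" "le a p" "y \<in> cs_carrier (A p)"
  shows "inv_into (cs_carrier (A a)) (j p a) y \<in> cs_carrier (A a)"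
    and "j p a (inv_into (cs_carrier (A a)) (j p a) y) = y"
  using bij_betwE[OF bij_betw_inv_into[OF bij_betw_j[OF assms(1-3)]]]
    bij_betw_inv_into_right[OF bij_betw_j[OF assms(1-3)]] assms(4) by auto

lemma j_comp:
  "\<lbrakk>e \<in> K; a \<in> K; p \<in> K; le e a; le a p; x \<in> cs_carrier (A e)\<rbrakk> \<Longrightarrow> j p a (j a e x) = j p e x"
  using net_bundle unfolding cstar_net_bundle_def by blast

lemma pullback_independent_of_bound:
  assumes K: "a \<in> K" "b \<in> K" "s \<in> K" "s' \<in> K"
    and le: "le a s" "le b s" "le a s'" "le b s'"
    and x: "x \<in> cs_carrier (A a)"
  shows "inv_into (cs_carrier (A b)) (j s b) (j s a x) = inv_into (cs_carrier (A b)) (j s' b) (j s' a x)"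
proof -
  have "one_simplex K le {a, b} s' s"
    using K le unfolding one_simplex_def by auto
  then obtain \<zeta> where \<zeta>: "\<forall>c\<in>{a, b}. \<forall>y\<in>cs_carrier (A c). \<zeta> (j s c y) = j s' c y"
    using cech unfolding cech_globally_defined_def cech_defined_on_def by blast
  define y where "y = inv_into (cs_carrier (A b)) (j s b) (j s a x)"
  have y: "y \<in> cs_carrier (A b)" "j s b y = j s a x"
    using inv_into_j[OF K(2,3) le(2) j_in_carrier[OF K(1,3) le(1) x]] unfolding y_def by auto
  have "j s' a x = j s' b y"
    using \<zeta> x y by (metis insertCI)
  then show ?thesis
    using bij_betw_inv_into_left[OF bij_betw_j[OF K(2,4) le(4)] y(1)] unfolding y_def by simp
qed

definition transport :: "'i \<Rightarrow> 'i \<Rightarrow> 'a \<Rightarrow> 'a" where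
  "transport b a =
     (let s = SOME s. s \<in> K \<and> le a s \<and> le b s in inv_into (cs_carrier (A b)) (j s b) \<circ> j s a)"

lemma transport_eq:
  assumes "a \<in> K" "b \<in> K" "s \<in> K" "le a s" "le b s" "x \<in> cs_carrier (A a)"
  shows "transport b a x = inv_into (cs_carrier (A b)) (j s b) (j s a x)"
proof -
  define s' where "s' = (SOME s. s \<in> K \<and> le a s \<and> le b s)"
  have "s' \<in> K \<and> le a s' \<and> le b s'"
    unfolding s'_def by (rule someI[of _ s]) (use assms in auto)
  then show ?thesis
    using pullback_independent_of_bound[of a b s' s x] assms
    unfolding transport_def s'_def[symmetric] by simp
qed

lemma star_iso_transport:
  assumes "a \<in> K" "b \<in> K" "s \<in> K" "le a s" "le b s"
  shows "star_iso (A a) (A b) (transport b a)"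
proof -
  define s' where "s' = (SOME s. s \<in> K \<and> le a s \<and> le b s)"
  have s': "s' \<in> K" "le a s'" "le b s'"
    using someI[of "\<lambda>s. s \<in> K \<and> le a s \<and> le b s" s] assms unfolding s'_def by auto
  show ?thesis
    unfolding transport_def s'_def[symmetric] Let_def
    by (rule star_iso_comp[OF star_iso_j[OF assms(1) s'(1,2)]
          star_iso_inv_into[OF unital_cstar_algebra_fibre[OF assms(2)] star_iso_j[OF assms(2) s'(1,3)]]])
qed

lemma transport_transport:
  assumes K: "a \<in> K" "b \<in> K" "c \<in> K" "s \<in> K"
    and le: "le a s" "le b s" "le c s"
    and x: "x \<in> cs_carrier (A a)"
  shows "transport c b (transport b a x) = transport c a x"
proof -
  define y where "y = transport b a x"
  have y: "y \<in> cs_carrier (A b)" "j s b y = j s a x"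
    using transport_eq[OF K(1,2,4) le(1,2) x] inv_into_j[OF K(2,4) le(2) j_in_carrier[OF K(1,4) le(1) x]]
    unfolding y_def by auto
  show ?thesis
    using transport_eq[OF K(2,3,4) le(2,3) y(1)] transport_eq[OF K(1,3,4) le(1,3) x] y
    unfolding y_def by simp
qed

text \<open>The trivialisation at \<open>p\<close> pulls back to a member of \<open>D\<close> below \<open>p\<close> and then transports to
  \<open>d\<^sub>0\<close>; boundedness of triples in \<open>D\<close> makes these maps compatible with the net.\<close>

theorem trivial_if_triply_bounded_cofinal:
  assumes D: "D \<subseteq> K" "d\<^sub>0 \<in> D"
    and below: "\<And>p. p \<in> K \<Longrightarrow> \<exists>d\<in>D. le d p"
    and bounded: "\<And>a b c. a \<in> D \<Longrightarrow> b \<in> D \<Longrightarrow> c \<in> D \<Longrightarrow> \<exists>s\<in>K. le a s \<and> le b s \<and> le c s"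
  shows "trivial_net_bundle K le A j"
proof -
  define small where "small p = (SOME d. d \<in> D \<and> le d p)" for p
  have small: "small p \<in> D" "small p \<in> K" "le (small p) p" if "p \<in> K" for p
    using someI_ex[OF below[OF that, unfolded Bex_def]] D(1) unfolding small_def by auto
  define \<phi> where "\<phi> p = transport d\<^sub>0 (small p) \<circ> inv_into (cs_carrier (A (small p))) (j p (small p))" for p
  have "star_iso (A p) (A d\<^sub>0) (\<phi> p)" if p: "p \<in> K" for p
  proof -
    obtain s where "s \<in> K" "le (small p) s" "le d\<^sub>0 s"
      using bounded[OF small(1)[OF p] D(2) D(2)] by blast
    then show ?thesis
      unfolding \<phi>_def
      using star_iso_comp[OF star_iso_inv_into[OF unital_cstar_algebra_fibre star_iso_j]
          star_iso_transport] small[OF p] p D by blast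
  qed
  moreover have "\<phi> p (j p a x) = \<phi> a x"
    if K: "p \<in> K" "a \<in> K" and le: "le a p" and x: "x \<in> cs_carrier (A a)" for p a x
  proof -
    note sp = small[OF K(1)] and sa = small[OF K(2)]
    define u where "u = inv_into (cs_carrier (A (small a))) (j a (small a)) x"
    have u: "u \<in> cs_carrier (A (small a))" "j a (small a) u = x"
      using inv_into_j[OF sa(2) K(2) sa(3) x] unfolding u_def by auto
    have "le (small a) p"
      using trans sa K le unfolding transp_on_def by blast
    then have "inv_into (cs_carrier (A (small p))) (j p (small p)) (j p a x) = transport (small p) (small a) u"
      using transport_eq[OF sa(2) sp(2) K(1) _ sp(3) u(1)] j_comp[OF sa(2) K(2,1) sa(3) le u(1)] u(2) by simp
    moreover obtain s where "s \<in> K" "le (small a) s" "le (small p) s" "le d\<^sub>0 s"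
      using bounded[OF sa(1) sp(1) D(2)] by blast
    ultimately have "\<phi> p (j p a x) = transport d\<^sub>0 (small a) u"
      using transport_transport[OF sa(2) sp(2) _ _ _ _ _ u(1)] D unfolding \<phi>_def by auto
    then show ?thesis
      unfolding \<phi>_def u_def by simp
  qed
  ultimately show ?thesis
    unfolding trivial_net_bundle_def
    using unital_cstar_algebra_fibre D by blast
qed

end

lemma cmod_add_sq_plus_cmod_diff_sq:
  fixes x z :: complex
  shows "(cmod (x + z))\<^sup>2 + (cmod (x - z))\<^sup>2 = 2 * ((cmod x)\<^sup>2 + (cmod z)\<^sup>2)"
  unfolding cmod_power2 by (simp add: power2_eq_square algebra_simps)

lemma cmod_cis_minus_one_sq: "(cmod (cis t - 1))\<^sup>2 = 2 - 2 * cos t"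
proof -
  have "(cmod (cis t - 1))\<^sup>2 = (cos t - 1)\<^sup>2 + (sin t)\<^sup>2"
    unfolding cmod_power2 by simp
  also have "\<dots> = ((sin t)\<^sup>2 + (cos t)\<^sup>2) + 1 - 2 * cos t"
    by (simp add: power2_diff)
  finally show ?thesis by simp
qed

lemma unit_eq_mult_cis_Arg:
  assumes "cmod z = 1" "cmod x = 1"
  shows "x = z * cis (Arg (x * cnj z))"
proof -
  have "x * cnj z \<noteq> 0" "cmod (x * cnj z) = 1"
    using assms by (auto simp: norm_mult)
  then have "cis (Arg (x * cnj z)) = x * cnj z"
    by (simp add: cis_Arg sgn_div_norm)
  moreover have "z * cnj z = 1"
    using assms(1) by (simp add: complex_mult_cnj cmod_def)
  ultimately show ?thesis
    by (metis mult.assoc mult.commute mult_1)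
qed

definition circle_ball :: "complex \<Rightarrow> real \<Rightarrow> complex set" where
  "circle_ball z r = S1 \<inter> ball z r"

lemma cmod_mult_cis_minus_less_iff:
  assumes z: "cmod z = 1" and r: "0 < r"
    and \<theta>: "0 \<le> \<theta>" "\<theta> \<le> pi" "cos \<theta> = 1 - r\<^sup>2/2" and t: "\<bar>t\<bar> \<le> pi"
  shows "cmod (z * cis t - z) < r \<longleftrightarrow> \<bar>t\<bar> < \<theta>"
proof -
  have "cmod (z * cis t - z) = cmod (cis t - 1)"
    by (metis mult.commute mult_1 norm_mult right_diff_distrib' z)
  then have "cmod (z * cis t - z) < r \<longleftrightarrow> (cmod (cis t - 1))\<^sup>2 < r\<^sup>2"
    using abs_le_square_iff[of r "cmod (cis t - 1)"] r by (simp add: not_le[symmetric])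
  also have "\<dots> \<longleftrightarrow> cos \<theta> < cos \<bar>t\<bar>"
    unfolding cmod_cis_minus_one_sq \<theta>(3) cos_abs_real by linarith
  also have "\<dots> \<longleftrightarrow> \<bar>t\<bar> < \<theta>"
    using t \<theta> by (intro cos_mono_less_eq) auto
  finally show ?thesis .
qed

lemma circle_ball_eq_image_cis:
  assumes z: "cmod z = 1" and r: "0 < r"
    and \<theta>: "0 \<le> \<theta>" "\<theta> \<le> pi" "cos \<theta> = 1 - r\<^sup>2/2"
  shows "circle_ball z r = (\<lambda>t. z * cis t) ` {-\<theta><..<\<theta>}"
proof (intro set_eqI iffI)
  fix x assume "x \<in> circle_ball z r"
  then have x: "cmod x = 1" "cmod (x - z) < r"
    by (auto simp: circle_ball_def S1_def dist_norm norm_minus_commute)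
  define t where "t = Arg (x * cnj z)"
  have "x = z * cis t" "\<bar>t\<bar> \<le> pi"
    using unit_eq_mult_cis_Arg[OF z x(1)] Arg_bounded[of "x * cnj z"] unfolding t_def by auto
  moreover from this have "\<bar>t\<bar> < \<theta>"
    using cmod_mult_cis_minus_less_iff[OF z r \<theta>] x(2) by simp
  ultimately show "x \<in> (\<lambda>t. z * cis t) ` {-\<theta><..<\<theta>}"
    by (auto intro!: image_eqI[of _ _ t])
next
  fix x assume "x \<in> (\<lambda>t. z * cis t) ` {-\<theta><..<\<theta>}"
  then obtain t where x: "x = z * cis t" and "t \<in> {-\<theta><..<\<theta>}"
    by blast
  then have t: "\<bar>t\<bar> < \<theta>"
    by auto
  then have "cmod (x - z) < r"
    unfolding x using cmod_mult_cis_minus_less_iff[OF z r \<theta>] \<theta>(2) by simp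
  then show "x \<in> circle_ball z r"
    using x z by (simp add: circle_ball_def S1_def dist_norm norm_mult norm_minus_commute)
qed

lemma connected_circle_ball:
  assumes z: "cmod z = 1" and r: "0 < r" "r < 2"
  shows "connected (circle_ball z r)"
proof -
  have "r\<^sup>2 < 2\<^sup>2"
    using r by (intro power_strict_mono) auto
  then have "-1 \<le> 1 - r\<^sup>2/2" "1 - r\<^sup>2/2 \<le> 1"
    by (simp_all add: zero_le_power2)
  then show ?thesis
    using circle_ball_eq_image_cis[OF z r(1) arccos_lbound arccos_ubound cos_arccos]
    by (auto intro!: connected_continuous_image continuous_intros)
qed

lemma circle_ball_in_circle_intervals:
  assumes z: "cmod z = 1" and r: "0 < r" "r < 2"
  shows "circle_ball z r \<in> circle_intervals"
proof -
  have "z \<in> circle_ball z r"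
    using z r by (simp add: circle_ball_def S1_def)
  moreover have "openin (top_of_set S1) (circle_ball z r)"
    unfolding circle_ball_def by auto
  moreover have "closure (circle_ball z r) \<subseteq> S1 \<inter> cball z r"
    unfolding circle_ball_def by (intro closure_minimal) (auto simp: S1_def)
  moreover have "-z \<in> S1 - cball z r"
    using z r by (simp add: S1_def dist_norm)
  ultimately show ?thesis
    using connected_circle_ball[OF assms] unfolding circle_intervals_def by blast
qed

lemma openin_S1_contains_small_circle_ball:
  assumes "openin (top_of_set S1) p" "p \<noteq> {}" "0 < \<epsilon>"
  shows "\<exists>z r. cmod z = 1 \<and> 0 < r \<and> r \<le> \<epsilon> \<and> circle_ball z r \<subseteq> p"
proof -
  obtain z where z: "z \<in> p"
    using assms(2) by blast
  with assms(1) obtain e where "e > 0" "\<forall>x\<in>S1. dist x z < e \<longrightarrow> x \<in> p" and "p \<subseteq> S1"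
    unfolding openin_euclidean_subtopology_iff by blast
  then have "cmod z = 1" "circle_ball z (min e \<epsilon>) \<subseteq> p"
    using z by (auto simp: circle_ball_def S1_def dist_commute)
  then show ?thesis
    using \<open>e > 0\<close> assms(3) by (intro exI[of _ z] exI[of _ "min e \<epsilon>"]) auto
qed

text \<open>Any point is within \<open>7/10\<close> of at most one of \<open>\<plusminus>1, \<plusminus>\<i>\<close>, as these are \<open>\<sqrt>2 > 7/5\<close> apart;
  so three points leave one of the four free.\<close>

lemma exists_unit_far_from_three:
  fixes z\<^sub>1 z\<^sub>2 z\<^sub>3 :: complex
  shows "\<exists>w. cmod w = 1 \<and> 7/10 \<le> cmod (z\<^sub>1 - w) \<and> 7/10 \<le> cmod (z\<^sub>2 - w) \<and> 7/10 \<le> cmod (z\<^sub>3 - w)"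
proof -
  have sep: "7/10 \<le> cmod (z - c) \<or> 7/10 \<le> cmod (z - c')"
    if "7/5 \<le> cmod (c - c')" for z c c' :: complex
    using that norm_triangle_ineq4[of "z - c'" "z - c"] by simp linarith
  have "7/5 \<le> sqrt (2::real)"
    by (rule real_le_rsqrt) (simp add: power2_eq_square)
  then have d: "7/5 \<le> cmod (1 - (-1::complex))" "7/5 \<le> cmod (1 - \<i>)" "7/5 \<le> cmod (1 - (-\<i>))"
    "7/5 \<le> cmod (-1 - \<i>)" "7/5 \<le> cmod (-1 - (-\<i>))" "7/5 \<le> cmod (\<i> - (-\<i>))"
    by (simp_all add: cmod_def)
  note S = sep[OF d(1)] sep[OF d(2)] sep[OF d(3)] sep[OF d(4)] sep[OF d(5)] sep[OF d(6)]
  let ?far = "\<lambda>w. 7/10 \<le> cmod (z\<^sub>1 - w) \<and> 7/10 \<le> cmod (z\<^sub>2 - w) \<and> 7/10 \<le> cmod (z\<^sub>3 - w)"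
  have "?far 1 \<or> ?far (-1) \<or> ?far \<i> \<or> ?far (-\<i>)"
    using S[of z\<^sub>1] S[of z\<^sub>2] S[of z\<^sub>3] by sat
  then show ?thesis
    by (metis norm_minus_cancel norm_one norm_ii)
qed

lemma small_circle_ball_subset_antipodal:
  assumes "cmod w = 1" "7/10 \<le> cmod (z - w)" "r \<le> 1/20"
  shows "circle_ball z r \<subseteq> circle_ball (-w) (19/10)"
proof
  fix x assume "x \<in> circle_ball z r"
  then have x: "cmod x = 1" "cmod (x - z) < r"
    by (auto simp: circle_ball_def S1_def dist_norm norm_minus_commute)
  have "cmod (z - w) \<le> cmod (z - x) + cmod (x - w)"
    by (rule norm_diff_triangle_le[of z x]) simp_all
  then have "13/20 < cmod (x - w)"
    using x assms by (simp add: norm_minus_commute)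
  then have "(13/20)\<^sup>2 < (cmod (x - w))\<^sup>2"
    by (intro power_strict_mono) auto
  then have "(cmod (x + w))\<^sup>2 < (19/10)\<^sup>2"
    using cmod_add_sq_plus_cmod_diff_sq[of x w] x(1) assms(1) by (simp add: power2_eq_square)
  then have "cmod (x + w) < 19/10"
    by (rule power_less_imp_less_base) simp
  then show "x \<in> circle_ball (-w) (19/10)"
    using x by (simp add: circle_ball_def S1_def dist_norm norm_minus_commute add.commute)
qed

lemma three_small_circle_balls_bounded:
  assumes "cmod z\<^sub>1 = 1" "cmod z\<^sub>2 = 1" "cmod z\<^sub>3 = 1" "r\<^sub>1 \<le> 1/20" "r\<^sub>2 \<le> 1/20" "r\<^sub>3 \<le> 1/20"
  shows "\<exists>s\<in>circle_intervals.
           circle_ball z\<^sub>1 r\<^sub>1 \<subseteq> s \<and> circle_ball z\<^sub>2 r\<^sub>2 \<subseteq> s \<and> circle_ball z\<^sub>3 r\<^sub>3 \<subseteq> s"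
proof -
  obtain w where "cmod w = 1" "7/10 \<le> cmod (z\<^sub>1 - w)" "7/10 \<le> cmod (z\<^sub>2 - w)" "7/10 \<le> cmod (z\<^sub>3 - w)"
    using exists_unit_far_from_three by blast
  then show ?thesis
    using small_circle_ball_subset_antipodal assms circle_ball_in_circle_intervals[of "-w" "19/10"]
    by (intro bexI[of _ "circle_ball (-w) (19/10)"]) auto
qed

theorem lemma5p11:
  fixes A :: "complex set \<Rightarrow> 'a cstar"
    and j :: "complex set \<Rightarrow> complex set \<Rightarrow> 'a \<Rightarrow> 'a"
  assumes "cstar_net_bundle circle_intervals (\<subseteq>) A j"
    and "cech_globally_defined circle_intervals (\<subseteq>) A j"
  shows "trivial_net_bundle circle_intervals (\<subseteq>) A j"
proof -
  interpret cech_defined_net_bundle circle_intervals "(\<subseteq>)" A j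
    using assms by unfold_locales (auto simp: transp_on_def)
  let ?D = "{circle_ball z r | z r. cmod z = 1 \<and> 0 < r \<and> r \<le> 1/20}"
  show ?thesis
  proof (rule trivial_if_triply_bounded_cofinal[of ?D "circle_ball 1 (1/20)"])
    show "?D \<subseteq> circle_intervals"
      using circle_ball_in_circle_intervals by fastforce
    show "circle_ball 1 (1/20) \<in> ?D"
      by (intro CollectI exI[of _ 1] exI[of _ "1/20"]) simp
  next
    fix p assume "p \<in> circle_intervals"
    then obtain z r where "cmod z = 1" "0 < r" "r \<le> 1/20" "circle_ball z r \<subseteq> p"
      using openin_S1_contains_small_circle_ball[of p "1/20"] unfolding circle_intervals_def by auto
    then show "\<exists>d\<in>?D. d \<subseteq> p"
      by blast
  next
    fix a b c assume "a \<in> ?D" "b \<in> ?D" "c \<in> ?D"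
    then obtain z\<^sub>1 r\<^sub>1 z\<^sub>2 r\<^sub>2 z\<^sub>3 r\<^sub>3
      where "a = circle_ball z\<^sub>1 r\<^sub>1" "b = circle_ball z\<^sub>2 r\<^sub>2" "c = circle_ball z\<^sub>3 r\<^sub>3"
        "cmod z\<^sub>1 = 1" "cmod z\<^sub>2 = 1" "cmod z\<^sub>3 = 1" "r\<^sub>1 \<le> 1/20" "r\<^sub>2 \<le> 1/20" "r\<^sub>3 \<le> 1/20"
      by blast
    then show "\<exists>s\<in>circle_intervals. a \<subseteq> s \<and> b \<subseteq> s \<and> c \<subseteq> s"
      using three_small_circle_balls_bounded by presburger
  qed
qed

end
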